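(* Assume the standing setup, let $(\hat\sigma,\varphi)$ be fine and let $\nu,\lambda$ be the fixed conformal measure. Then for every finite set $D\subset E$ and every integer $n\ge0$ there exists $\beta=\beta_{D,n}>0$ such that $$\nu_x([\omega]_x)\ge\beta$$ for every integer $0\le k\le n$, every word $\omega\in D_x^k$ and $m$-a.e. $x\in X$.
   Context: Standing setup. $(X,\mathcal F,m)$ is a complete probability space and $\theta:X\to X$ an invertible measurable $m$-preserving map. $E=\mathbb N$, and $x\mapsto A(x)=(A_{ij}(x))_{i,j\in E}$ is a measurable map into $\{0,1\}$-matrices. $E_x^n$ is the set of words $\omega_0\cdots\omega_n\in E^{n+1}$ with $A_{\omega_i\omega_{i+1}}(\theta^i(x))=1$ for $0\le i\le n-1$; for $D\subset E$, $D_x^n$ is the set of words in $E_x^n$ with all letters in $D$; $E_x^\infty$ is the set of $\omega\in E^{\mathbb N}$ with $A_{\omega_i\omega_{i+1}}(\theta^i(x))=1$ for all $i$. For $\omega\in E_x^n$, $[\omega]_x=\{\tau\in E_x^\infty:\tau_0\cdots\tau_n=\omega\}$; $[F]_x=\{\tau\in E_x^\infty:\tau_0\in F\}$, $[0,\dots,l]_x=[\{0,\dots,l\}]_x$; complements in $E_x^\infty$. Metric $d(\omega,\tau)=e^{-\min\{n:\omega_n\ne\tau_n\}}$. $\sigma_x:E_x^\infty\to E_{\theta(x)}^\infty$ the shift, $\Omega=\bigcup_x\{x\}\times E_x^\infty$, $\hat\sigma(x,\omega)=(\theta(x),\sigma_x\omega)$, $\varphi_x=\varphi(x,\cdot)$.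 $\hat\sigma$ is topologically mixing: for all $a,b\in E$ there is $N$ such that for all $n\ge N$ and all $x$ there is a word $\omega$ of length $n+1$ with $a\omega b\in E_x^{n+2}$. Fix $\alpha>0$; $v_\alpha(g)=\sup\{|g(\tau)-g(\omega)|/d(\tau,\omega)^\alpha:\tau\ne\omega,\tau_0=\omega_0\}$. Summable potential: measurable $\varphi:\Omega\to\mathbb R$, $\varphi_x$ continuous, $\operatorname{ess\,sup}_xv_\alpha(\varphi_x)<\infty$, for each $e$ constants $0<c_e<C_e$ with $c_e\le e^{\varphi_x}\le C_e$ on $[e]_x$ a.e., and $\lim_{l\to\infty}\operatorname{ess\,sup}_x\sup\mathcal L_x(1_{[0,\dots,l]_x^c})=0$, where $\mathcal L_xg(\omega)=\sum_{e:\,A_{e\omega_0}(x)=1}g(e\omega)e^{\varphi_x(e\omega)}$, $\omega\in E_{\theta(x)}^\infty$. (A): for each $e$ some $M_e>0$ with $M_e^{-1}\le\mathcal L_x1$ on $[e]_{\theta(x)}$ a.e.; (B): $\lim_{e\to\infty}\operatorname{ess\,sup}_x\sup_{[e]_{\theta(x)}}\mathcal L_x1=0$; (C): there are $0<\kappa<1/4$ and finite $F\subset E$ with $\sup\mathcal L_x(1_{E_x^\infty\setminus[F]_x})\le\kappa\inf_{[F]_{\theta(x)}}\mathcal L_x1$ a.e. Fine: $\varphi$ summable and (A),(B),(C). Random measures: probability measures on $\Omega$ with marginal $m$ and disintegrations $\nu_x$ (probabilities on $E_x^\infty$). Fixed conformal measure: a random measure $\nu$ with a measurable $\lambda:X\to(0,\infty)$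 such that $\int\mathcal L_xg\,d\nu_{\theta(x)}=\lambda_x\int g\,d\nu_x$ for all bounded continuous $g$ on $E_x^\infty$ and a.e. $x$, with $\operatorname{ess\,sup}|\log\lambda|<\infty$ and $\nu_x([F]_x)\ge1/2$ for a.e. $x$, $F$ being the set from (C) (the conformal measure constructed in the paper has these properties). *)

theory Defs
  imports "HOL-Analysis.Analysis" "HOL-Probability.Probability"
begin

text \<open>Alphabet E = nat; a random 0/1 transition matrix is a predicate A x i j
  (A x i j = True means A_ij(x) = 1). Words are lists; one-sided sequences are nat => nat.\<close>

definition adm_word :: "('a \<Rightarrow> nat \<Rightarrow> nat \<Rightarrow> bool) \<Rightarrow> ('a \<Rightarrow> 'a) \<Rightarrow> 'a \<Rightarrow> nat list \<Rightarrow> bool" where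
  "adm_word A \<theta> x w \<longleftrightarrow> (\<forall>i. Suc i < length w \<longrightarrow> A ((\<theta> ^^ i) x) (w ! i) (w ! Suc i))"

definition Ewords :: "('a \<Rightarrow> nat \<Rightarrow> nat \<Rightarrow> bool) \<Rightarrow> ('a \<Rightarrow> 'a) \<Rightarrow> 'a \<Rightarrow> nat \<Rightarrow> nat list set" where
  "Ewords A \<theta> x n = {w. length w = Suc n \<and> adm_word A \<theta> x w}"

definition Dwords :: "nat set \<Rightarrow> ('a \<Rightarrow> nat \<Rightarrow> nat \<Rightarrow> bool) \<Rightarrow> ('a \<Rightarrow> 'a) \<Rightarrow> 'a \<Rightarrow> nat \<Rightarrow> nat list set" where
  "Dwords D A \<theta> x n = {w \<in> Ewords A \<theta> x n. set w \<subseteq> D}"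

definition Einf :: "('a \<Rightarrow> nat \<Rightarrow> nat \<Rightarrow> bool) \<Rightarrow> ('a \<Rightarrow> 'a) \<Rightarrow> 'a \<Rightarrow> (nat \<Rightarrow> nat) set" where
  "Einf A \<theta> x = {\<omega>. \<forall>i. A ((\<theta> ^^ i) x) (\<omega> i) (\<omega> (Suc i))}"

definition cyl :: "('a \<Rightarrow> nat \<Rightarrow> nat \<Rightarrow> bool) \<Rightarrow> ('a \<Rightarrow> 'a) \<Rightarrow> 'a \<Rightarrow> nat list \<Rightarrow> (nat \<Rightarrow> nat) set" where
  "cyl A \<theta> x w = {\<tau> \<in> Einf A \<theta> x. \<forall>i < length w. \<tau> i = w ! i}"

definition cylset :: "('a \<Rightarrow> nat \<Rightarrow> nat \<Rightarrow> bool) \<Rightarrow> ('a \<Rightarrow> 'a) \<Rightarrow> 'a \<Rightarrow> nat set \<Rightarrow> (nat \<Rightarrow> nat) set" where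
  "cylset A \<theta> x F = {\<tau> \<in> Einf A \<theta> x. \<tau> 0 \<in> F}"

definition dseq :: "(nat \<Rightarrow> nat) \<Rightarrow> (nat \<Rightarrow> nat) \<Rightarrow> real" where
  "dseq \<omega> \<tau> = (if \<omega> = \<tau> then 0 else exp (- real (LEAST n. \<omega> n \<noteq> \<tau> n)))"

definition d_continuous_on :: "(nat \<Rightarrow> nat) set \<Rightarrow> ((nat \<Rightarrow> nat) \<Rightarrow> real) \<Rightarrow> bool" where
  "d_continuous_on S f \<longleftrightarrow>
     (\<forall>\<omega>\<in>S. \<forall>\<epsilon>>0. \<exists>\<delta>>0. \<forall>\<tau>\<in>S. dseq \<tau> \<omega> < \<delta> \<longrightarrow> \<bar>f \<tau> - f \<omega>\<bar> < \<epsilon>)"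

definition scons :: "nat \<Rightarrow> (nat \<Rightarrow> nat) \<Rightarrow> (nat \<Rightarrow> nat)" where
  "scons e \<omega> = case_nat e \<omega>"

definition Lop :: "('a \<Rightarrow> nat \<Rightarrow> nat \<Rightarrow> bool) \<Rightarrow> ('a \<Rightarrow> (nat \<Rightarrow> nat) \<Rightarrow> real) \<Rightarrow> 'a
     \<Rightarrow> ((nat \<Rightarrow> nat) \<Rightarrow> real) \<Rightarrow> (nat \<Rightarrow> nat) \<Rightarrow> real" where
  "Lop A \<phi> x g \<omega> = (\<Sum>e. if A x e (\<omega> 0) then g (scons e \<omega>) * exp (\<phi> x (scons e \<omega>)) else 0)"

text \<open>The same operator applied to nonnegative (extended) functions; the value may be infinite,
  so bounds on it also assert convergence.\<close>
definition LopE :: "('a \<Rightarrow> nat \<Rightarrow> nat \<Rightarrow> bool) \<Rightarrow> ('a \<Rightarrow> (nat \<Rightarrow> nat) \<Rightarrow> real) \<Rightarrow> 'a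
     \<Rightarrow> ((nat \<Rightarrow> nat) \<Rightarrow> ennreal) \<Rightarrow> (nat \<Rightarrow> nat) \<Rightarrow> ennreal" where
  "LopE A \<phi> x g \<omega> = (\<Sum>e. if A x e (\<omega> 0) then g (scons e \<omega>) * ennreal (exp (\<phi> x (scons e \<omega>))) else 0)"

abbreviation SeqS :: "(nat \<Rightarrow> nat) measure" where
  "SeqS \<equiv> PiM UNIV (\<lambda>_. count_space UNIV)"

definition top_mixing :: "('a \<Rightarrow> nat \<Rightarrow> nat \<Rightarrow> bool) \<Rightarrow> ('a \<Rightarrow> 'a) \<Rightarrow> bool" where
  "top_mixing A \<theta> \<longleftrightarrow> (\<forall>a b. \<exists>N. \<forall>n\<ge>N. \<forall>x.
      \<exists>w. length w = Suc n \<and> a # w @ [b] \<in> Ewords A \<theta> x (Suc (Suc n)))"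

definition summable_potential :: "'a measure \<Rightarrow> ('a \<Rightarrow> nat \<Rightarrow> nat \<Rightarrow> bool) \<Rightarrow> ('a \<Rightarrow> 'a)
     \<Rightarrow> real \<Rightarrow> ('a \<Rightarrow> (nat \<Rightarrow> nat) \<Rightarrow> real) \<Rightarrow> bool" where
  "summable_potential M A \<theta> \<alpha> \<phi> \<longleftrightarrow>
     (\<lambda>p. \<phi> (fst p) (snd p)) \<in> borel_measurable
        (restrict_space (M \<Otimes>\<^sub>M SeqS) (SIGMA x:space M. Einf A \<theta> x))
   \<and> (\<forall>x\<in>space M. d_continuous_on (Einf A \<theta> x) (\<phi> x))
   \<and> (\<exists>C. (AE x in M. \<forall>\<tau>\<in>Einf A \<theta> x. \<forall>\<omega>\<in>Einf A \<theta> x. \<tau> \<noteq> \<omega> \<longrightarrow> \<tau> 0 = \<omega> 0 \<longrightarrow>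
          \<bar>\<phi> x \<tau> - \<phi> x \<omega>\<bar> \<le> C * dseq \<tau> \<omega> powr \<alpha>))
   \<and> (\<forall>e. \<exists>c C. 0 < c \<and> c < C \<and> (AE x in M. \<forall>\<omega>\<in>cyl A \<theta> x [e].
          c \<le> exp (\<phi> x \<omega>) \<and> exp (\<phi> x \<omega>) \<le> C))
   \<and> (\<forall>\<epsilon>>0. \<exists>l0. \<forall>l\<ge>l0. (AE x in M. \<forall>\<omega>\<in>Einf A \<theta> (\<theta> x).
          LopE A \<phi> x (indicator (Einf A \<theta> x - cylset A \<theta> x {0..l})) \<omega> \<le> ennreal \<epsilon>))"

text \<open>Fine: summable plus (A), (B), (C) with the given kappa and F.\<close>
definition fine_potential :: "'a measure \<Rightarrow> ('a \<Rightarrow> nat \<Rightarrow> nat \<Rightarrow> bool) \<Rightarrow> ('a \<Rightarrow> 'a)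
     \<Rightarrow> real \<Rightarrow> ('a \<Rightarrow> (nat \<Rightarrow> nat) \<Rightarrow> real) \<Rightarrow> real \<Rightarrow> nat set \<Rightarrow> bool" where
  "fine_potential M A \<theta> \<alpha> \<phi> \<kappa> F \<longleftrightarrow>
     summable_potential M A \<theta> \<alpha> \<phi>
   \<and> (\<forall>e. \<exists>Me>0. (AE x in M. \<forall>\<omega>\<in>cyl A \<theta> (\<theta> x) [e].
          ennreal (1 / Me) \<le> LopE A \<phi> x (\<lambda>_. 1) \<omega>))
   \<and> (\<forall>\<epsilon>>0. \<exists>e0. \<forall>e\<ge>e0. (AE x in M. \<forall>\<omega>\<in>cyl A \<theta> (\<theta> x) [e].
          LopE A \<phi> x (\<lambda>_. 1) \<omega> \<le> ennreal \<epsilon>))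
   \<and> 0 < \<kappa> \<and> \<kappa> < 1/4 \<and> finite F
   \<and> (AE x in M. \<forall>\<omega>\<in>Einf A \<theta> (\<theta> x). \<forall>\<omega>'\<in>cylset A \<theta> (\<theta> x) F.
          LopE A \<phi> x (indicator (Einf A \<theta> x - cylset A \<theta> x F)) \<omega>
            \<le> ennreal \<kappa> * LopE A \<phi> x (\<lambda>_. 1) \<omega>')"

definition fixed_conformal :: "'a measure \<Rightarrow> ('a \<Rightarrow> nat \<Rightarrow> nat \<Rightarrow> bool) \<Rightarrow> ('a \<Rightarrow> 'a)
     \<Rightarrow> ('a \<Rightarrow> (nat \<Rightarrow> nat) \<Rightarrow> real) \<Rightarrow> nat set
     \<Rightarrow> ('a \<Rightarrow> (nat \<Rightarrow> nat) measure) \<Rightarrow> ('a \<Rightarrow> real) \<Rightarrow> bool" where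
  "fixed_conformal M A \<theta> \<phi> F \<nu> lam \<longleftrightarrow>
     (\<forall>x\<in>space M. prob_space (\<nu> x) \<and> sets (\<nu> x) = sets SeqS
        \<and> emeasure (\<nu> x) (Einf A \<theta> x) = 1)
   \<and> (\<forall>B\<in>sets SeqS. (\<lambda>x. emeasure (\<nu> x) B) \<in> borel_measurable M)
   \<and> lam \<in> borel_measurable M \<and> (\<forall>x\<in>space M. 0 < lam x)
   \<and> (\<exists>C. (AE x in M. \<bar>ln (lam x)\<bar> \<le> C))
   \<and> (AE x in M. \<forall>g. (\<exists>B. \<forall>\<omega>\<in>Einf A \<theta> x. \<bar>g \<omega>\<bar> \<le> B) \<longrightarrow> d_continuous_on (Einf A \<theta> x) g \<longrightarrow>
        (LINT \<omega>:Einf A \<theta> (\<theta> x)|\<nu> (\<theta> x). Lop A \<phi> x g \<omega>)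
          = lam x * (LINT \<omega>:Einf A \<theta> x|\<nu> x. g \<omega>))
   \<and> (AE x in M. measure (\<nu> x) (cylset A \<theta> x F) \<ge> 1/2)"

end

theory Submission
  imports Defs
begin

text \<open>Fix a word \<open>\<omega>\<close> in \<open>D\<close> of length at most \<open>n + 1\<close> at \<open>x\<close>. By mixing it extends, through a
  bridge of fixed length \<open>N\<close>, to a word \<open>u\<close> ending in a letter \<open>b \<in> F\<close> whose cylinder has
  measure at least \<open>1/(2 card F)\<close>; such a \<open>b\<close> exists because \<open>\<nu>([F]) \<ge> 1/2\<close>. Conformality
  applied to the indicator of \<open>[a v]\<close> times \<open>exp (- \<phi>)\<close> gives
  \<open>\<nu>\<^sub>x [a v] \<ge> (c\<^sub>a / \<lambda>\<^sub>x) \<nu>\<^sub>\<theta>\<^sub>x [v]\<close>, where \<open>c\<^sub>a\<close> bounds \<open>exp \<phi>\<close> from below on \<open>[a]\<close>; iterating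
  along \<open>u\<close> bounds \<open>\<nu>\<^sub>x [\<omega>] \<ge> \<nu>\<^sub>x [u]\<close> below by a power of \<open>min c\<^sub>a / sup \<lambda>\<close> over the letters of
  \<open>u\<close> times \<open>\<nu>([b])\<close>. The bridge letters are not a priori bounded, but condition (B) shows
  that \<open>e\<close> can follow \<open>a\<close> in a nonempty cylinder only if \<open>e < K a\<close>; hence all letters of \<open>u\<close>
  lie in a finite set determined by \<open>D\<close>, \<open>n\<close> and \<open>N\<close>, and the constant is uniform. All
  estimates hold along the \<open>\<theta>\<close>-orbit of almost every \<open>x\<close> because \<open>\<theta>\<close> preserves \<open>m\<close>.\<close>

lemma sets_Einf: "Einf A \<theta> x \<in> sets SeqS"
proof -
  have "Einf A \<theta> x = (\<Inter>i. {\<omega>\<in>space SeqS. A ((\<theta>^^i) x) (\<omega> i) (\<omega> (Suc i))})"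
    by (auto simp: Einf_def space_PiM)
  also have "\<dots> \<in> sets SeqS" by measurable
  finally show ?thesis .
qed

lemma sets_cyl: "cyl A \<theta> x w \<in> sets SeqS"
proof -
  have "cyl A \<theta> x w = Einf A \<theta> x \<inter> {\<omega>\<in>space SeqS. \<forall>i\<in>{..<length w}. \<omega> i = w ! i}"
    by (auto simp: cyl_def space_PiM)
  also have "\<dots> \<in> sets SeqS" by (intro sets.Int sets_Einf) measurable
  finally show ?thesis .
qed

lemma cyl_Nil [simp]: "cyl A \<theta> x [] = Einf A \<theta> x"
  by (simp add: cyl_def)

lemma cyl_append_subset: "cyl A \<theta> x (xs @ ys) \<subseteq> cyl A \<theta> x xs"
  by (auto simp: cyl_def nth_append)

lemma scons_mem_Einf: "scons e \<omega> \<in> Einf A \<theta> x \<longleftrightarrow> A x e (\<omega> 0) \<and> \<omega> \<in> Einf A \<theta> (\<theta> x)"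
  unfolding Einf_def scons_def
  by (auto simp: funpow_Suc_right simp del: funpow.simps split: nat.split)

lemma scons_mem_cyl_Cons: "scons e \<omega> \<in> cyl A \<theta> x (a # v) \<longleftrightarrow>
   A x e (\<omega> 0) \<and> e = a \<and> \<omega> \<in> cyl A \<theta> (\<theta> x) v"
proof -
  have "(\<forall>i<length (a # v). scons e \<omega> i = (a # v) ! i) \<longleftrightarrow> e = a \<and> (\<forall>i<length v. \<omega> i = v ! i)"
    by (auto simp: scons_def less_Suc_eq_0_disj)
  then show ?thesis by (auto simp: cyl_def scons_mem_Einf)
qed

lemma shift_mem_Einf:
  assumes "\<tau> \<in> Einf A \<theta> x" shows "(\<lambda>i. \<tau> (i + m)) \<in> Einf A \<theta> ((\<theta>^^m) x)"
proof -
  have "(\<theta>^^i) ((\<theta>^^m) x) = (\<theta>^^(i + m)) x" for i by (simp add: funpow_add)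
  then show ?thesis using assms by (simp add: Einf_def)
qed

lemma adm_word_Cons:
  "adm_word A \<theta> x (a # v) \<longleftrightarrow> (v \<noteq> [] \<longrightarrow> A x a (hd v)) \<and> adm_word A \<theta> (\<theta> x) v"
proof -
  have "adm_word A \<theta> x (a # v) \<longleftrightarrow> (Suc 0 < length (a # v) \<longrightarrow> A x a (v ! 0)) \<and>
      (\<forall>j. Suc (Suc j) < length (a # v) \<longrightarrow> A ((\<theta> ^^ Suc j) x) ((a # v) ! Suc j) ((a # v) ! Suc (Suc j)))"
    unfolding adm_word_def by (metis funpow_0 nth_Cons_0 nth_Cons_Suc not0_implies_Suc)
  also have "\<dots> \<longleftrightarrow> (v \<noteq> [] \<longrightarrow> A x a (hd v)) \<and> adm_word A \<theta> (\<theta> x) v"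
    by (cases v) (auto simp: adm_word_def funpow_Suc_right simp del: funpow.simps)
  finally show ?thesis .
qed

lemma adm_word_append:
  assumes "adm_word A \<theta> x (xs @ [a])" "adm_word A \<theta> ((\<theta>^^length xs) x) (a # ys)"
  shows "adm_word A \<theta> x (xs @ a # ys)"
  using assms
proof (induction xs arbitrary: x)
  case (Cons c xs)
  have "adm_word A \<theta> (\<theta> x) (xs @ a # ys)"
    using Cons.prems by (intro Cons.IH) (auto simp: adm_word_Cons funpow_swap1)
  moreover have "hd (xs @ a # ys) = hd (xs @ [a])" by (cases xs) auto
  ultimately show ?case using Cons.prems(1) by (simp add: adm_word_Cons)
qed simp

lemma Ewords_append_bridge:
  assumes "\<omega> \<in> Ewords A \<theta> x k" "last \<omega> # w @ [b] \<in> Ewords A \<theta> ((\<theta>^^k) x) m"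
  shows "\<omega> @ w @ [b] \<in> Ewords A \<theta> x (k + m)"
proof -
  have len: "length \<omega> = Suc k" using assms(1) by (simp add: Ewords_def)
  then have \<omega>: "butlast \<omega> @ [last \<omega>] = \<omega>" "length (butlast \<omega>) = k"
    by (auto intro: append_butlast_last_id)
  have "adm_word A \<theta> x (butlast \<omega> @ [last \<omega>])" using assms(1) \<omega>(1) by (simp add: Ewords_def)
  moreover have "adm_word A \<theta> ((\<theta>^^length (butlast \<omega>)) x) (last \<omega> # w @ [b])"
    using assms(2) \<omega>(2) by (simp add: Ewords_def)
  ultimately have "adm_word A \<theta> x (butlast \<omega> @ last \<omega> # w @ [b])" by (rule adm_word_append)
  moreover have "butlast \<omega> @ last \<omega> # w @ [b] = \<omega> @ w @ [b]"
    using \<omega>(1) by (metis append.assoc append_Cons append_Nil)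
  ultimately show ?thesis using assms(2) len by (simp add: Ewords_def)
qed

lemma top_mixing_uniform:
  assumes "top_mixing A \<theta>" "finite D" "finite F"
  obtains N where "\<And>a b z. a \<in> D \<Longrightarrow> b \<in> F \<Longrightarrow>
    \<exists>w. length w = Suc N \<and> a # w @ [b] \<in> Ewords A \<theta> z (Suc (Suc N))"
proof -
  obtain N where N: "\<forall>n\<ge>N a b. \<forall>z. \<exists>w. length w = Suc n \<and> a # w @ [b] \<in> Ewords A \<theta> z (Suc (Suc n))"
    for a b
    using assms(1) unfolding top_mixing_def by metis
  have "N a b \<le> Max (case_prod N ` (D \<times> F))" if "a \<in> D" "b \<in> F" for a b
    using that assms(2,3) by (intro Max_ge) force+
  then show ?thesis using N by (intro that) blast
qed

lemma dseq_less_exp_imp_eq: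
  assumes "dseq \<tau> \<omega> < exp (- real n)" "i \<le> n" shows "\<tau> i = \<omega> i"
proof (rule ccontr)
  assume ne: "\<tau> i \<noteq> \<omega> i"
  then have "(LEAST m. \<tau> m \<noteq> \<omega> m) \<le> n" using assms(2) by (meson Least_le order_trans)
  then have "exp (- real n) \<le> dseq \<tau> \<omega>" using ne by (auto simp: dseq_def)
  then show False using assms(1) by simp
qed

lemma d_continuous_on_compose:
  assumes "d_continuous_on S f" "continuous_on UNIV h"
  shows "d_continuous_on S (\<lambda>\<tau>. h (f \<tau>))"
  unfolding d_continuous_on_def
proof (intro ballI allI impI)
  fix \<omega> and \<epsilon> :: real assume \<omega>: "\<omega> \<in> S" and \<epsilon>: "\<epsilon> > 0"
  have "isCont h (f \<omega>)" using assms(2) by (simp add: continuous_on_eq_continuous_at)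
  then obtain \<eta> where \<eta>: "\<eta> > 0" "\<And>s. dist s (f \<omega>) < \<eta> \<Longrightarrow> dist (h s) (h (f \<omega>)) < \<epsilon>"
    using \<epsilon> unfolding continuous_at_eps_delta by blast
  obtain \<delta> where "\<delta> > 0" "\<forall>\<tau>\<in>S. dseq \<tau> \<omega> < \<delta> \<longrightarrow> \<bar>f \<tau> - f \<omega>\<bar> < \<eta>"
    using assms(1) \<omega> \<eta>(1) unfolding d_continuous_on_def by blast
  then show "\<exists>\<delta>>0. \<forall>\<tau>\<in>S. dseq \<tau> \<omega> < \<delta> \<longrightarrow> \<bar>h (f \<tau>) - h (f \<omega>)\<bar> < \<epsilon>"
    using \<eta>(2) by (metis dist_real_def)
qed

lemma d_continuous_on_indicator_cyl_mult:
  assumes "d_continuous_on (Einf A \<theta> x) f"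
  shows "d_continuous_on (Einf A \<theta> x) (\<lambda>\<tau>. indicator (cyl A \<theta> x w) \<tau> * f \<tau>)"
  unfolding d_continuous_on_def
proof (intro ballI allI impI)
  fix \<omega> and \<epsilon> :: real assume \<omega>: "\<omega> \<in> Einf A \<theta> x" and \<epsilon>: "\<epsilon> > 0"
  obtain \<delta> where \<delta>: "\<delta> > 0" "\<forall>\<tau>\<in>Einf A \<theta> x. dseq \<tau> \<omega> < \<delta> \<longrightarrow> \<bar>f \<tau> - f \<omega>\<bar> < \<epsilon>"
    using assms \<omega> \<epsilon> unfolding d_continuous_on_def by blast
  show "\<exists>\<delta>>0. \<forall>\<tau>\<in>Einf A \<theta> x. dseq \<tau> \<omega> < \<delta> \<longrightarrow>
     \<bar>indicator (cyl A \<theta> x w) \<tau> * f \<tau> - indicator (cyl A \<theta> x w) \<omega> * f \<omega>\<bar> < \<epsilon>"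
  proof (intro exI[of _ "min \<delta> (exp (- real (length w)))"] conjI ballI impI)
    fix \<tau> assume \<tau>: "\<tau> \<in> Einf A \<theta> x" and close: "dseq \<tau> \<omega> < min \<delta> (exp (- real (length w)))"
    then have "\<forall>i<length w. \<tau> i = \<omega> i" by (auto intro: dseq_less_exp_imp_eq)
    then have "\<tau> \<in> cyl A \<theta> x w \<longleftrightarrow> \<omega> \<in> cyl A \<theta> x w" using \<tau> \<omega> by (auto simp: cyl_def)
    then show "\<bar>indicator (cyl A \<theta> x w) \<tau> * f \<tau> - indicator (cyl A \<theta> x w) \<omega> * f \<omega>\<bar> < \<epsilon>"
      using \<delta> \<tau> close \<epsilon> by (auto simp: indicator_def)
  qed (use \<delta> in simp)
qed

lemma Lop_indicator_cyl_Cons: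
  assumes "v \<noteq> []" "A x a (hd v)"
  shows "Lop A \<phi> x (\<lambda>\<tau>. indicator (cyl A \<theta> x (a # v)) \<tau> * exp (- \<phi> x \<tau>)) \<omega>
       = indicator (cyl A \<theta> (\<theta> x) v) \<omega>"
proof -
  have "\<omega> 0 = hd v" if "\<omega> \<in> cyl A \<theta> (\<theta> x) v"
    using that assms(1) by (cases v) (auto simp: cyl_def)
  then have "(\<lambda>e. if A x e (\<omega> 0)
        then indicator (cyl A \<theta> x (a # v)) (scons e \<omega>) * exp (- \<phi> x (scons e \<omega>)) * exp (\<phi> x (scons e \<omega>))
        else 0)
      = (\<lambda>e. if e = a then indicator (cyl A \<theta> (\<theta> x) v) \<omega> else 0)"
    using assms(2) by (intro ext) (auto simp: scons_mem_cyl_Cons indicator_def exp_minus)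
  then show ?thesis
    unfolding Lop_def by (simp add: sums_unique[OF sums_single, symmetric])
qed

lemma exp_le_LopE_one:
  assumes "A x a (\<omega> 0)"
  shows "ennreal (exp (\<phi> x (scons a \<omega>))) \<le> LopE A \<phi> x (\<lambda>_. 1) \<omega>"
proof -
  let ?f = "\<lambda>e. if A x e (\<omega> 0) then 1 * ennreal (exp (\<phi> x (scons e \<omega>))) else 0"
  have "sum ?f {a} \<le> suminf ?f" by (intro sum_le_suminf) (auto intro: summableI)
  then show ?thesis using assms by (simp add: LopE_def)
qed

definition conformal_at :: "('a \<Rightarrow> nat \<Rightarrow> nat \<Rightarrow> bool) \<Rightarrow> ('a \<Rightarrow> 'a) \<Rightarrow> ('a \<Rightarrow> (nat \<Rightarrow> nat) \<Rightarrow> real)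
     \<Rightarrow> ('a \<Rightarrow> (nat \<Rightarrow> nat) measure) \<Rightarrow> ('a \<Rightarrow> real) \<Rightarrow> 'a \<Rightarrow> bool" where
  "conformal_at A \<theta> \<phi> \<nu> lam x \<longleftrightarrow>
     prob_space (\<nu> x) \<and> sets (\<nu> x) = sets SeqS \<and> 0 < lam x \<and> d_continuous_on (Einf A \<theta> x) (\<phi> x)
   \<and> (\<forall>g. (\<exists>B. \<forall>\<omega>\<in>Einf A \<theta> x. \<bar>g \<omega>\<bar> \<le> B) \<longrightarrow> d_continuous_on (Einf A \<theta> x) g \<longrightarrow>
        (LINT \<omega>:Einf A \<theta> (\<theta> x)|\<nu> (\<theta> x). Lop A \<phi> x g \<omega>)
          = lam x * (LINT \<omega>:Einf A \<theta> x|\<nu> x. g \<omega>))"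

lemma set_integral_le_measure_div:
  fixes g :: "'a \<Rightarrow> real"
  assumes "finite_measure N" "Z \<in> sets N" "0 < c" "\<And>\<tau>. g \<tau> \<le> indicator Z \<tau> / c"
  shows "(LINT \<omega>:S|N. g \<omega>) \<le> measure N Z / c"
proof -
  have Z_integrable: "integrable N (\<lambda>\<omega>. indicator Z \<omega> / c)"
    using assms(1,2) by (intro integrable_divide integrable_real_indicator)
      (auto simp: finite_measure.emeasure_finite less_top[symmetric])
  have "(LINT \<omega>:S|N. g \<omega>) \<le> (LINT \<omega>|N. indicator Z \<omega> / c)"
    unfolding set_lebesgue_integral_def
  proof (cases "integrable N (\<lambda>\<omega>. indicator S \<omega> *\<^sub>R g \<omega>)")
    case True
    show "(LINT \<omega>|N. indicator S \<omega> *\<^sub>R g \<omega>) \<le> (LINT \<omega>|N. indicator Z \<omega> / c)"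
    proof (rule integral_mono[OF True Z_integrable])
      fix \<omega> show "indicator S \<omega> *\<^sub>R g \<omega> \<le> indicator Z \<omega> / c"
        using assms(3) assms(4)[of \<omega>] by (cases "\<omega> \<in> S") auto
    qed
  qed (use assms in \<open>simp add: not_integrable_integral_eq finite_measure.emeasure_finite\<close>)
  also have "\<dots> = measure N Z / c"
    using assms(1,2) by (simp add: finite_measure.emeasure_finite)
  finally show ?thesis .
qed

lemma measure_cyl_Cons_ge:
  assumes conf: "conformal_at A \<theta> \<phi> \<nu> lam x" and conf': "conformal_at A \<theta> \<phi> \<nu> lam (\<theta> x)"
    and c: "0 < c" "\<forall>\<omega>\<in>cyl A \<theta> x [a]. c \<le> exp (\<phi> x \<omega>)"
    and v: "v \<noteq> []" "A x a (hd v)"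
  shows "c / lam x * measure (\<nu> (\<theta> x)) (cyl A \<theta> (\<theta> x) v) \<le> measure (\<nu> x) (cyl A \<theta> x (a # v))"
proof -
  define Z where "Z = cyl A \<theta> x (a # v)"
  define g where "g = (\<lambda>\<tau>. indicator Z \<tau> * exp (- \<phi> x \<tau>))"
  have px: "finite_measure (\<nu> x)" "Z \<in> sets (\<nu> x)"
    using conf sets_cyl by (auto simp: conformal_at_def Z_def prob_space.finite_measure)
  have pt: "finite_measure (\<nu> (\<theta> x))" "cyl A \<theta> (\<theta> x) v \<in> sets (\<nu> (\<theta> x))"
    using conf' sets_cyl by (auto simp: conformal_at_def prob_space.finite_measure)
  have g_bound: "0 \<le> g \<tau> \<and> g \<tau> \<le> indicator Z \<tau> / c" for \<tau>
  proof (cases "\<tau> \<in> Z")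
    case True
    then have "c \<le> exp (\<phi> x \<tau>)" using c(2) by (auto simp: Z_def cyl_def)
    then show ?thesis using True c(1) by (simp add: g_def exp_minus field_simps)
  qed (simp add: g_def)
  have "d_continuous_on (Einf A \<theta> x) g"
    using conf unfolding g_def Z_def conformal_at_def
    by (intro d_continuous_on_indicator_cyl_mult d_continuous_on_compose[where h="\<lambda>s. exp (- s)"])
       (auto intro!: continuous_intros)
  moreover have "\<exists>B. \<forall>\<omega>\<in>Einf A \<theta> x. \<bar>g \<omega>\<bar> \<le> B"
  proof (intro exI[of _ "1 / c"] ballI)
    fix \<omega> show "\<bar>g \<omega>\<bar> \<le> 1 / c"
      using g_bound[of \<omega>] c(1) by (cases "\<omega> \<in> Z") auto
  qed
  ultimately have conformality: "(LINT \<omega>:Einf A \<theta> (\<theta> x)|\<nu> (\<theta> x). Lop A \<phi> x g \<omega>)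
      = lam x * (LINT \<omega>:Einf A \<theta> x|\<nu> x. g \<omega>)"
    using conf by (auto simp: conformal_at_def)
  have "(LINT \<omega>:Einf A \<theta> (\<theta> x)|\<nu> (\<theta> x). Lop A \<phi> x g \<omega>)
      = (LINT \<omega>|\<nu> (\<theta> x). indicator (cyl A \<theta> (\<theta> x) v) \<omega>)"
    unfolding set_lebesgue_integral_def g_def Z_def Lop_indicator_cyl_Cons[where A=A and x=x and a=a, OF v]
    by (intro Bochner_Integration.integral_cong refl) (auto simp: indicator_def cyl_def)
  also have "\<dots> = measure (\<nu> (\<theta> x)) (cyl A \<theta> (\<theta> x) v)"
    using pt by (simp add: finite_measure.emeasure_finite)
  finally have lhs: "measure (\<nu> (\<theta> x)) (cyl A \<theta> (\<theta> x) v) = lam x * (LINT \<omega>:Einf A \<theta> x|\<nu> x. g \<omega>)"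
    using conformality by simp
  have "(LINT \<omega>:Einf A \<theta> x|\<nu> x. g \<omega>) \<le> measure (\<nu> x) Z / c"
    using px c(1) g_bound by (intro set_integral_le_measure_div) auto
  then show ?thesis
    using lhs conf c(1) by (simp add: Z_def conformal_at_def field_simps)
qed

lemma measure_cyl_ge_pow:
  assumes "\<And>j. conformal_at A \<theta> \<phi> \<nu> lam ((\<theta>^^j) x)"
    and "adm_word A \<theta> x u" "u \<noteq> []" "0 < r"
    and "\<And>j. Suc j < length u \<Longrightarrow>
           \<forall>\<omega>\<in>cyl A \<theta> ((\<theta>^^j) x) [u ! j]. r * lam ((\<theta>^^j) x) \<le> exp (\<phi> ((\<theta>^^j) x) \<omega>)"
  shows "r ^ (length u - 1) * measure (\<nu> ((\<theta>^^(length u - 1)) x)) (cyl A \<theta> ((\<theta>^^(length u - 1)) x) [last u])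
     \<le> measure (\<nu> x) (cyl A \<theta> x u)"
  using assms(1,2,3,5)
proof (induction u arbitrary: x)
  case (Cons a v)
  show ?case
  proof (cases "v = []")
    case False
    have conf: "conformal_at A \<theta> \<phi> \<nu> lam x" "conformal_at A \<theta> \<phi> \<nu> lam (\<theta> x)"
      using Cons.prems(1)[of 0] Cons.prems(1)[of 1] by simp_all
    have adm: "adm_word A \<theta> (\<theta> x) v" "A x a (hd v)"
      using Cons.prems(2) False by (auto simp: adm_word_Cons)
    have IH: "r ^ (length v - 1) * measure (\<nu> ((\<theta>^^(length v - 1)) (\<theta> x)))
          (cyl A \<theta> ((\<theta>^^(length v - 1)) (\<theta> x)) [last v])
        \<le> measure (\<nu> (\<theta> x)) (cyl A \<theta> (\<theta> x) v)"
    proof (rule Cons.IH[OF _ adm(1) False])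
      show "conformal_at A \<theta> \<phi> \<nu> lam ((\<theta>^^j) (\<theta> x))" for j
        using Cons.prems(1)[of "Suc j"] by (simp add: funpow_swap1)
      show "\<forall>\<omega>\<in>cyl A \<theta> ((\<theta>^^j) (\<theta> x)) [v ! j]. r * lam ((\<theta>^^j) (\<theta> x)) \<le> exp (\<phi> ((\<theta>^^j) (\<theta> x)) \<omega>)"
        if "Suc j < length v" for j
        using that Cons.prems(4)[of "Suc j"] by (simp add: funpow_swap1)
    qed
    have step: "r * lam x / lam x * measure (\<nu> (\<theta> x)) (cyl A \<theta> (\<theta> x) v) \<le> measure (\<nu> x) (cyl A \<theta> x (a # v))"
      using Cons.prems(4)[of 0] False conf assms(4)
      by (intro measure_cyl_Cons_ge adm(2)) (auto simp: conformal_at_def)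
    have "(\<theta>^^(length v - 1)) (\<theta> x) = (\<theta>^^(length (a # v) - 1)) x"
      using False by (cases v) (simp_all add: funpow_Suc_right del: funpow.simps)
    then have "r ^ (length (a # v) - 1) * measure (\<nu> ((\<theta>^^(length (a # v) - 1)) x))
          (cyl A \<theta> ((\<theta>^^(length (a # v) - 1)) x) [last (a # v)])
        = r * (r ^ (length v - 1) * measure (\<nu> ((\<theta>^^(length v - 1)) (\<theta> x)))
          (cyl A \<theta> ((\<theta>^^(length v - 1)) (\<theta> x)) [last v]))"
      using False by (cases v) simp_all
    also have "\<dots> \<le> r * measure (\<nu> (\<theta> x)) (cyl A \<theta> (\<theta> x) v)"
      using IH assms(4) by simp
    also have "\<dots> \<le> measure (\<nu> x) (cyl A \<theta> x (a # v))"
      using step conf(1) by (simp add: conformal_at_def)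
    finally show ?thesis .
  qed simp
qed simp

lemma exists_letter_measure_ge:
  assumes "finite_measure N" "sets N = sets SeqS" "finite F" "F \<noteq> {}"
    "1/2 \<le> measure N (cylset A \<theta> x F)"
  obtains b where "b \<in> F" "1 / (2 * card F) \<le> measure N (cyl A \<theta> x [b])"
proof -
  have "\<exists>b\<in>F. 1 / (2 * card F) \<le> measure N (cyl A \<theta> x [b])"
  proof (rule ccontr)
    assume "\<not> ?thesis"
    then have small: "\<And>b. b \<in> F \<Longrightarrow> measure N (cyl A \<theta> x [b]) < 1 / (2 * card F)"
      by (auto simp: not_le)
    have "cylset A \<theta> x F = (\<Union>b\<in>F. cyl A \<theta> x [b])" by (auto simp: cylset_def cyl_def)
    then have "measure N (cylset A \<theta> x F) \<le> (\<Sum>b\<in>F. measure N (cyl A \<theta> x [b]))"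
      using assms(2,3) sets_cyl by (auto intro!: measure_UNION_le)
    also have "\<dots> < (\<Sum>b\<in>F. 1 / (2 * card F))" using assms(3,4) small by (intro sum_strict_mono) auto
    also have "\<dots> = 1/2" using assms(3,4) by simp
    finally show False using assms(5) by simp
  qed
  then show thesis using that by blast
qed

definition reachable_letters :: "(nat \<Rightarrow> nat) \<Rightarrow> nat set \<Rightarrow> nat \<Rightarrow> nat set" where
  "reachable_letters K D j = ((\<lambda>S. S \<union> (\<Union>a\<in>S. {..<K a})) ^^ j) D"

lemma reachable_letters_0 [simp]: "reachable_letters K D 0 = D"
  by (simp add: reachable_letters_def)

lemma reachable_letters_Suc:
  "reachable_letters K D (Suc j) = reachable_letters K D j \<union> (\<Union>a\<in>reachable_letters K D j. {..<K a})"
  by (simp add: reachable_letters_def)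

lemma finite_reachable_letters: "finite D \<Longrightarrow> finite (reachable_letters K D j)"
  by (induction j) (simp_all add: reachable_letters_Suc)

lemma reachable_letters_mono: "i \<le> j \<Longrightarrow> reachable_letters K D i \<subseteq> reachable_letters K D j"
  using lift_Suc_mono_le[of "reachable_letters K D"] by (auto simp: reachable_letters_Suc)

lemma AE_orbit:
  assumes "\<theta> \<in> M \<rightarrow>\<^sub>M M" "distr M M \<theta> = M" "AE x in M. P x"
  shows "AE x in M. \<forall>j. P ((\<theta>^^j) x)"
proof -
  have "AE x in M. P ((\<theta>^^j) x)" for j
  proof (induction j)
    case (Suc j)
    have "AE x in M. P ((\<theta>^^j) (\<theta> x))"
      by (rule AE_distrD[OF assms(1)]) (subst assms(2), rule Suc)
    then show ?case by (simp add: funpow_swap1)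
  qed (use assms(3) in simp)
  then show ?thesis by (simp add: AE_all_countable)
qed

locale good_orbit =
  fixes A :: "'a \<Rightarrow> nat \<Rightarrow> nat \<Rightarrow> bool" and \<theta> :: "'a \<Rightarrow> 'a" and \<phi> :: "'a \<Rightarrow> (nat \<Rightarrow> nat) \<Rightarrow> real"
    and \<nu> :: "'a \<Rightarrow> (nat \<Rightarrow> nat) measure" and lam :: "'a \<Rightarrow> real"
    and cf :: "nat \<Rightarrow> real" and K :: "nat \<Rightarrow> nat" and C :: real and F :: "nat set" and x :: 'a
  assumes conformal: "conformal_at A \<theta> \<phi> \<nu> lam ((\<theta>^^j) x)"
    and cf_pos: "0 < cf e"
    and cf_le_exp: "\<omega> \<in> cyl A \<theta> ((\<theta>^^j) x) [e] \<Longrightarrow> cf e \<le> exp (\<phi> ((\<theta>^^j) x) \<omega>)"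
    and lam_le: "lam ((\<theta>^^j) x) \<le> exp C"
    and transfer_small: "K a \<le> e \<Longrightarrow> \<omega> \<in> cyl A \<theta> ((\<theta>^^Suc j) x) [e] \<Longrightarrow>
           LopE A \<phi> ((\<theta>^^j) x) (\<lambda>_. 1) \<omega> \<le> ennreal (cf a / 2)"
    and F_heavy: "1/2 \<le> measure (\<nu> ((\<theta>^^j) x)) (cylset A \<theta> ((\<theta>^^j) x) F)"
begin

lemma measure_cyl_ge:
  assumes "adm_word A \<theta> x u" "u \<noteq> []" "0 < r" "\<forall>a\<in>set u. r \<le> cf a / exp C"
  shows "r ^ (length u - 1) * measure (\<nu> ((\<theta>^^(length u - 1)) x)) (cyl A \<theta> ((\<theta>^^(length u - 1)) x) [last u])
     \<le> measure (\<nu> x) (cyl A \<theta> x u)"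
proof (rule measure_cyl_ge_pow[OF conformal assms(1-3)], intro ballI)
  fix j \<omega> assume j: "Suc j < length u" and \<omega>: "\<omega> \<in> cyl A \<theta> ((\<theta>^^j) x) [u ! j]"
  have "r \<le> cf (u ! j) / exp C" using assms(4) j by simp
  then have "r * lam ((\<theta>^^j) x) \<le> cf (u ! j) / exp C * exp C"
    using conformal[of j] lam_le[of j] assms(3) by (intro mult_mono) (auto simp: conformal_at_def)
  also have "\<dots> \<le> exp (\<phi> ((\<theta>^^j) x) \<omega>)" using cf_le_exp[OF \<omega>] by simp
  finally show "r * lam ((\<theta>^^j) x) \<le> exp (\<phi> ((\<theta>^^j) x) \<omega>)" .
qed

text \<open>The summand \<open>a\<close> alone makes the transfer of \<open>1\<close> at least \<open>cf a\<close> on \<open>[e]\<close> whenever \<open>e\<close>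
  can follow \<open>a\<close>, whereas for \<open>e \<ge> K a\<close> it is at most \<open>cf a / 2\<close>.\<close>

lemma cyl_successor_lt:
  assumes \<tau>: "\<tau> \<in> cyl A \<theta> x u" and j: "Suc j < length u"
  shows "u ! Suc j < K (u ! j)"
proof (rule ccontr)
  assume "\<not> u ! Suc j < K (u ! j)"
  define \<tau>' where "\<tau>' = (\<lambda>i. \<tau> (i + Suc j))"
  have \<tau>_letters: "\<tau> j = u ! j" "\<tau> (Suc j) = u ! Suc j" "\<tau> \<in> Einf A \<theta> x"
    using \<tau> j by (auto simp: cyl_def)
  have \<tau>': "\<tau>' \<in> cyl A \<theta> ((\<theta>^^Suc j) x) [u ! Suc j]"
    using shift_mem_Einf[OF \<tau>_letters(3), of "Suc j"] \<tau>_letters(2) by (simp add: cyl_def \<tau>'_def)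
  have trans: "A ((\<theta>^^j) x) (u ! j) (\<tau>' 0)"
    using \<tau>_letters(3) by (simp add: Einf_def \<tau>'_def flip: \<tau>_letters(1,2))
  have "scons (u ! j) \<tau>' \<in> cyl A \<theta> ((\<theta>^^j) x) [u ! j]"
    using \<tau>' trans by (simp add: scons_mem_cyl_Cons cyl_def[of _ _ _ "[u ! Suc j]"])
  then have "ennreal (cf (u ! j)) \<le> ennreal (exp (\<phi> ((\<theta>^^j) x) (scons (u ! j) \<tau>')))"
    using cf_le_exp by (simp add: ennreal_leI)
  also have "\<dots> \<le> LopE A \<phi> ((\<theta>^^j) x) (\<lambda>_. 1) \<tau>'"
    using trans by (rule exp_le_LopE_one)
  also have "\<dots> \<le> ennreal (cf (u ! j) / 2)"
    using transfer_small[OF _ \<tau>'] \<open>\<not> u ! Suc j < K (u ! j)\<close> by simp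
  finally show False using cf_pos[of "u ! j"] by (simp add: ennreal_le_iff)
qed

lemma cyl_letters_reachable:
  assumes "\<tau> \<in> cyl A \<theta> x u" "u ! 0 \<in> D" "j < length u"
  shows "u ! j \<in> reachable_letters K D j"
  using assms(3)
proof (induction j)
  case (Suc j)
  then show ?case
    using cyl_successor_lt[OF assms(1), of j] by (auto simp: reachable_letters_Suc)
qed (simp add: assms(2))

lemma exists_heavy_extension:
  assumes F: "finite F" "F \<noteq> {}"
    and mix: "\<And>a b z. a \<in> D \<Longrightarrow> b \<in> F \<Longrightarrow>
               \<exists>w. length w = Suc N \<and> a # w @ [b] \<in> Ewords A \<theta> z (Suc (Suc N))"
    and \<omega>: "\<omega> \<in> Dwords D A \<theta> x k"
  defines "y \<equiv> (\<theta>^^(k + N + 2)) x"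
  obtains u b where "u \<in> Ewords A \<theta> x (k + N + 2)" "u ! 0 \<in> D" "last u = b"
    "cyl A \<theta> x u \<subseteq> cyl A \<theta> x \<omega>" "1 / (2 * card F) \<le> measure (\<nu> y) (cyl A \<theta> y [b])"
proof -
  have "finite_measure (\<nu> y)" "sets (\<nu> y) = sets SeqS"
    using conformal[of "k + N + 2"] by (auto simp: conformal_at_def y_def prob_space.finite_measure)
  then obtain b where b: "b \<in> F" "1 / (2 * card F) \<le> measure (\<nu> y) (cyl A \<theta> y [b])"
    using exists_letter_measure_ge F F_heavy unfolding y_def by metis
  have \<omega>E: "\<omega> \<in> Ewords A \<theta> x k" "set \<omega> \<subseteq> D" using \<omega> by (auto simp: Dwords_def)
  then have "\<omega> \<noteq> []" by (auto simp: Ewords_def)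
  then have "last \<omega> \<in> D" "\<omega> ! 0 \<in> D" using \<omega>E(2) by (auto dest: nth_mem)
  obtain w where w: "last \<omega> # w @ [b] \<in> Ewords A \<theta> ((\<theta>^^k) x) (Suc (Suc N))"
    using mix[OF \<open>last \<omega> \<in> D\<close> b(1)] by blast
  show thesis
  proof (rule that[of "\<omega> @ w @ [b]" b])
    show "\<omega> @ w @ [b] \<in> Ewords A \<theta> x (k + N + 2)"
      using Ewords_append_bridge[OF \<omega>E(1) w] by simp
    show "(\<omega> @ w @ [b]) ! 0 \<in> D" using \<open>\<omega> ! 0 \<in> D\<close> \<open>\<omega> \<noteq> []\<close> by (simp add: nth_append)
  qed (use b cyl_append_subset[of A \<theta> x \<omega> "w @ [b]"] in auto)
qed

lemma measure_cyl_Dwords_ge: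
  assumes F: "finite F" "F \<noteq> {}"
    and mix: "\<And>a b z. a \<in> D \<Longrightarrow> b \<in> F \<Longrightarrow>
               \<exists>w. length w = Suc N \<and> a # w @ [b] \<in> Ewords A \<theta> z (Suc (Suc N))"
    and \<omega>: "\<omega> \<in> Dwords D A \<theta> x k" and T: "k + N + 2 \<le> T"
    and r: "0 < r" "r \<le> 1" "\<forall>a\<in>reachable_letters K D T. r \<le> cf a / exp C"
  shows "r ^ T / (2 * card F) \<le> measure (\<nu> x) (cyl A \<theta> x \<omega>)"
proof -
  define L where "L = k + N + 2"
  define y where "y = (\<theta>^^L) x"
  obtain u b where "u \<in> Ewords A \<theta> x L" "u ! 0 \<in> D" "last u = b" and u_\<omega>: "cyl A \<theta> x u \<subseteq> cyl A \<theta> x \<omega>"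
    and b: "1 / (2 * card F) \<le> measure (\<nu> y) (cyl A \<theta> y [b])"
    using exists_heavy_extension[OF F mix \<omega>] unfolding L_def y_def by metis
  then have u: "adm_word A \<theta> x u" "length u = Suc L" "u \<noteq> []" "last u = b" "u ! 0 \<in> D"
    by (auto simp: Ewords_def)
  have F_weight: "0 < 1 / (2 * real (card F))" using F by (simp add: card_gt_0_iff)
  then have b_pos: "0 < measure (\<nu> y) (cyl A \<theta> y [b])" using b by linarith
  have u_bound: "\<rho> ^ L * measure (\<nu> y) (cyl A \<theta> y [b]) \<le> measure (\<nu> x) (cyl A \<theta> x u)"
    if "0 < \<rho>" "\<forall>a\<in>set u. \<rho> \<le> cf a / exp C" for \<rho>
    using measure_cyl_ge[OF u(1,3) that] u(2,4) by (simp add: y_def)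
  txt \<open>A word-dependent constant first shows that \<open>[u]\<close> is nonempty, which is what confines
    the letters of \<open>u\<close> to the finite set \<open>reachable_letters K D T\<close>.\<close>
  define \<rho> where "\<rho> = Min (cf ` set u) / exp C"
  have "0 < \<rho>" using cf_pos by (simp add: \<rho>_def Min_gr_iff u(3))
  moreover have "\<forall>a\<in>set u. \<rho> \<le> cf a / exp C"
    by (simp add: \<rho>_def divide_right_mono)
  ultimately have "0 < measure (\<nu> x) (cyl A \<theta> x u)"
    using u_bound[of \<rho>] b_pos by (meson order_less_le_trans zero_less_mult_iff zero_less_power)
  then obtain \<tau> where \<tau>: "\<tau> \<in> cyl A \<theta> x u" by (metis ex_in_conv measure_empty less_irrefl)
  have "a \<in> reachable_letters K D T" if "a \<in> set u" for a
  proof -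
    obtain j where "j < length u" "a = u ! j" using \<open>a \<in> set u\<close> by (metis in_set_conv_nth)
    then show ?thesis
      using cyl_letters_reachable[OF \<tau> u(5)] reachable_letters_mono[of j T] u(2) T
      by (auto simp: L_def)
  qed
  then have "r ^ L * measure (\<nu> y) (cyl A \<theta> y [b]) \<le> measure (\<nu> x) (cyl A \<theta> x u)"
    using u_bound r by blast
  also have "\<dots> \<le> measure (\<nu> x) (cyl A \<theta> x \<omega>)"
    using conformal[of 0] sets_cyl u_\<omega>
    by (intro finite_measure.finite_measure_mono) (auto simp: conformal_at_def prob_space.finite_measure)
  finally have main: "r ^ L * measure (\<nu> y) (cyl A \<theta> y [b]) \<le> measure (\<nu> x) (cyl A \<theta> x \<omega>)" .
  have "r ^ T / (2 * card F) = r ^ T * (1 / (2 * card F))" by simp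
  also have "\<dots> \<le> r ^ L * (1 / (2 * card F))"
    using r T F_weight by (intro mult_right_mono power_decreasing) (auto simp: L_def)
  also have "\<dots> \<le> r ^ L * measure (\<nu> y) (cyl A \<theta> y [b])"
    using b r(1) by (intro mult_left_mono) auto
  finally show ?thesis using main by linarith
qed

end

lemma fine_potential_exp_lower_bound:
  assumes "fine_potential M A \<theta> \<alpha> \<phi> \<kappa> F"
  obtains cf where "\<And>e. 0 < cf e" "AE x in M. \<forall>e. \<forall>\<omega>\<in>cyl A \<theta> x [e]. cf e \<le> exp (\<phi> x \<omega>)"
proof -
  have bounds: "\<forall>e. \<exists>c C. 0 < c \<and> c < C \<and> (AE x in M. \<forall>\<omega>\<in>cyl A \<theta> x [e].
          c \<le> exp (\<phi> x \<omega>) \<and> exp (\<phi> x \<omega>) \<le> C)"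
    using assms unfolding fine_potential_def summable_potential_def by (elim conjE)
  have "\<forall>e. \<exists>c. 0 < c \<and> (AE x in M. \<forall>\<omega>\<in>cyl A \<theta> x [e]. c \<le> exp (\<phi> x \<omega>))"
  proof
    fix e
    obtain c C where "0 < c" "AE x in M. \<forall>\<omega>\<in>cyl A \<theta> x [e]. c \<le> exp (\<phi> x \<omega>) \<and> exp (\<phi> x \<omega>) \<le> C"
      using bounds by blast
    then show "\<exists>c. 0 < c \<and> (AE x in M. \<forall>\<omega>\<in>cyl A \<theta> x [e]. c \<le> exp (\<phi> x \<omega>))"
      by (auto elim!: eventually_mono)
  qed
  from choice[OF this] obtain cf
    where "\<And>e. 0 < cf e" "\<And>e. AE x in M. \<forall>\<omega>\<in>cyl A \<theta> x [e]. cf e \<le> exp (\<phi> x \<omega>)"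
    by blast
  then show thesis by (intro that[of cf]) (simp_all add: AE_all_countable)
qed

lemma fine_potential_transfer_decay:
  fixes \<epsilon> :: "nat \<Rightarrow> real"
  assumes "fine_potential M A \<theta> \<alpha> \<phi> \<kappa> F" "\<And>a. 0 < \<epsilon> a"
  obtains K where "AE x in M. \<forall>a e. K a \<le> e \<longrightarrow>
    (\<forall>\<omega>\<in>cyl A \<theta> (\<theta> x) [e]. LopE A \<phi> x (\<lambda>_. 1) \<omega> \<le> ennreal (\<epsilon> a))"
proof -
  have decay: "\<forall>\<epsilon>>0. \<exists>e0. \<forall>e\<ge>e0. AE x in M. \<forall>\<omega>\<in>cyl A \<theta> (\<theta> x) [e]. LopE A \<phi> x (\<lambda>_. 1) \<omega> \<le> ennreal \<epsilon>"
    using assms(1) unfolding fine_potential_def by (elim conjE)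
  have "\<forall>a. \<exists>e0. \<forall>e\<ge>e0. AE x in M. \<forall>\<omega>\<in>cyl A \<theta> (\<theta> x) [e]. LopE A \<phi> x (\<lambda>_. 1) \<omega> \<le> ennreal (\<epsilon> a)"
    using decay assms(2) by blast
  from choice[OF this] obtain K where K: "\<And>a e. K a \<le> e \<Longrightarrow>
      AE x in M. \<forall>\<omega>\<in>cyl A \<theta> (\<theta> x) [e]. LopE A \<phi> x (\<lambda>_. 1) \<omega> \<le> ennreal (\<epsilon> a)"
    by blast
  have "AE x in M. K a \<le> e \<longrightarrow>
      (\<forall>\<omega>\<in>cyl A \<theta> (\<theta> x) [e]. LopE A \<phi> x (\<lambda>_. 1) \<omega> \<le> ennreal (\<epsilon> a))" for a e
    using K by (cases "K a \<le> e") simp_all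
  then show thesis by (intro that[of K]) (simp add: AE_all_countable)
qed

lemma fixed_conformal_nonempty:
  assumes "prob_space M" "fixed_conformal M A \<theta> \<phi> F \<nu> lam"
  shows "F \<noteq> {}"
proof
  assume "F = {}"
  have "AE x in M. 1/2 \<le> measure (\<nu> x) (cylset A \<theta> x F)"
    using assms(2) unfolding fixed_conformal_def by blast
  then have "AE x in M. False"
    using \<open>F = {}\<close> by (simp add: cylset_def)
  then show False using assms(1) by (simp add: prob_space.AE_False)
qed

lemma AE_conformal_at:
  assumes "fixed_conformal M A \<theta> \<phi> F \<nu> lam" "\<forall>y\<in>space M. d_continuous_on (Einf A \<theta> y) (\<phi> y)"
  shows "AE y in M. conformal_at A \<theta> \<phi> \<nu> lam y \<and> 1/2 \<le> measure (\<nu> y) (cylset A \<theta> y F)"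
  using assms unfolding conformal_at_def AE_conj_iff fixed_conformal_def by (auto intro!: AE_I2)

lemma AE_good_orbit:
  assumes \<theta>: "\<theta> \<in> M \<rightarrow>\<^sub>M M" "distr M M \<theta> = M"
    and fine: "fine_potential M A \<theta> \<alpha> \<phi> \<kappa> F" and conf: "fixed_conformal M A \<theta> \<phi> F \<nu> lam"
  obtains cf K C where "\<And>e. 0 < cf e" "AE x in M. good_orbit A \<theta> \<phi> \<nu> lam cf K C F x"
proof -
  obtain cf where cf: "\<And>e. 0 < cf e" "AE x in M. \<forall>e. \<forall>\<omega>\<in>cyl A \<theta> x [e]. cf e \<le> exp (\<phi> x \<omega>)"
    using fine_potential_exp_lower_bound[OF fine] by blast
  obtain K where K: "AE x in M. \<forall>a e. K a \<le> e \<longrightarrow>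
      (\<forall>\<omega>\<in>cyl A \<theta> (\<theta> x) [e]. LopE A \<phi> x (\<lambda>_. 1) \<omega> \<le> ennreal (cf a / 2))"
    using fine_potential_transfer_decay[OF fine, where \<epsilon> = "\<lambda>a. cf a / 2"] cf(1) by auto
  obtain C where C: "AE x in M. \<bar>ln (lam x)\<bar> \<le> C"
    using conf unfolding fixed_conformal_def by blast
  have lam_le: "lam y \<le> exp C" if "0 < lam y" "\<bar>ln (lam y)\<bar> \<le> C" for y
    using that by (metis abs_le_D1 exp_le_cancel_iff exp_ln)
  have "\<forall>y\<in>space M. d_continuous_on (Einf A \<theta> y) (\<phi> y)"
    using fine by (simp add: fine_potential_def summable_potential_def)
  then have "AE y in M. conformal_at A \<theta> \<phi> \<nu> lam y \<and> 1/2 \<le> measure (\<nu> y) (cylset A \<theta> y F)"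
    using conf by (rule AE_conformal_at[rotated])
  then have "AE y in M. conformal_at A \<theta> \<phi> \<nu> lam y \<and> lam y \<le> exp C
      \<and> 1/2 \<le> measure (\<nu> y) (cylset A \<theta> y F)
      \<and> (\<forall>e. \<forall>\<omega>\<in>cyl A \<theta> y [e]. cf e \<le> exp (\<phi> y \<omega>))
      \<and> (\<forall>a e. K a \<le> e \<longrightarrow> (\<forall>\<omega>\<in>cyl A \<theta> (\<theta> y) [e]. LopE A \<phi> y (\<lambda>_. 1) \<omega> \<le> ennreal (cf a / 2)))"
    using C cf(2) K
  proof eventually_elim
    case (elim y)
    then have "0 < lam y" unfolding conformal_at_def by blast
    with elim lam_le show ?case by blast
  qed
  from AE_orbit[OF \<theta> this] have "AE x in M. good_orbit A \<theta> \<phi> \<nu> lam cf K C F x"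
    by (elim eventually_mono) (auto intro!: good_orbit.intro cf(1))
  then show thesis using cf(1) that by blast
qed

theorem lemma4p1:
  fixes M :: "'a measure" and \<theta> :: "'a \<Rightarrow> 'a" and A :: "'a \<Rightarrow> nat \<Rightarrow> nat \<Rightarrow> bool"
    and \<alpha> :: real and \<phi> :: "'a \<Rightarrow> (nat \<Rightarrow> nat) \<Rightarrow> real" and \<kappa> :: real and F :: "nat set"
    and \<nu> :: "'a \<Rightarrow> (nat \<Rightarrow> nat) measure" and lam :: "'a \<Rightarrow> real"
  assumes "prob_space M" and "complete_measure M"
    and "\<theta> \<in> M \<rightarrow>\<^sub>M M" and "distr M M \<theta> = M" and "bij_betw \<theta> (space M) (space M)"
    and "inv_into (space M) \<theta> \<in> M \<rightarrow>\<^sub>M M"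
    and "\<forall>i j. {x \<in> space M. A x i j} \<in> sets M"
    and "top_mixing A \<theta>"
    and "\<alpha> > 0"
    and "fine_potential M A \<theta> \<alpha> \<phi> \<kappa> F"
    and "fixed_conformal M A \<theta> \<phi> F \<nu> lam"
  shows "\<forall>D. finite D \<longrightarrow> (\<forall>n::nat. \<exists>\<beta>>0. (AE x in M. \<forall>k\<le>n. \<forall>w\<in>Dwords D A \<theta> x k.
           measure (\<nu> x) (cyl A \<theta> x w) \<ge> \<beta>))"
proof (intro allI impI)
  fix D :: "nat set" and n :: nat
  assume D: "finite D"
  have F: "finite F" "F \<noteq> {}"
    using assms(10) fixed_conformal_nonempty[OF assms(1,11)] unfolding fine_potential_def by blast+
  obtain cf K C where cf: "\<And>e. 0 < cf e" and orbit: "AE x in M. good_orbit A \<theta> \<phi> \<nu> lam cf K C F x"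
    using AE_good_orbit[OF assms(3,4,10,11)] by blast
  obtain N where mix: "\<And>a b z. a \<in> D \<Longrightarrow> b \<in> F \<Longrightarrow>
      \<exists>w. length w = Suc N \<and> a # w @ [b] \<in> Ewords A \<theta> z (Suc (Suc N))"
    using top_mixing_uniform[OF assms(8) D F(1)] by blast
  define T where "T = n + N + 2"
  txt \<open>\<open>insert 1\<close> avoids \<open>Min {}\<close> when \<open>D = {}\<close>.\<close>
  define r where "r = min 1 (Min (insert 1 (cf ` reachable_letters K D T)) / exp C)"
  have r: "0 < r" "r \<le> 1" "\<forall>a\<in>reachable_letters K D T. r \<le> cf a / exp C"
    using cf finite_reachable_letters[OF D]
    by (auto simp: r_def Min_gr_iff intro!: min.coboundedI2 divide_right_mono Min_le)
  show "\<exists>\<beta>>0. AE x in M. \<forall>k\<le>n. \<forall>w\<in>Dwords D A \<theta> x k. \<beta> \<le> measure (\<nu> x) (cyl A \<theta> x w)"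
  proof (intro exI conjI)
    show "0 < r ^ T / (2 * card F)" using r F by (simp add: card_gt_0_iff)
    show "AE x in M. \<forall>k\<le>n. \<forall>w\<in>Dwords D A \<theta> x k. r ^ T / (2 * card F) \<le> measure (\<nu> x) (cyl A \<theta> x w)"
      using orbit by eventually_elim (use good_orbit.measure_cyl_Dwords_ge[OF _ F mix _ _ r] T_def in auto)
  qed
qed

end
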